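(* Let $B$ be a C*-algebra and let $A$ be a regular subalgebra of $B$ satisfying the ideal intersection property. Then every $B$-invariant regular ideal of $A$ is normalizer-invariant.
   Context: Ideals are closed two-sided ideals. $A\subseteq B$ is a closed *-subalgebra. A normalizer of $A$ in $B$ is $n\in B$ with $n^*An\subseteq A$ and $nAn^*\subseteq A$; $A$ is a regular subalgebra if the normalizers span a dense subspace of $B$ and $A$ contains an approximate unit for $B$. A subset $S\subseteq A$ is normalizer-invariant if $nSn^*\subseteq S$ for every normalizer $n$. $S\subseteq A$ is $B$-invariant if $[SB]=[BS]$ ($[\cdot]$ = closed linear span). For an ideal $I$ of $A$, $\mathrm{Ann}_A(I)=\{x\in A: xs=0\ \forall s\in I\}$, and $I$ is regular if $\mathrm{Ann}_A(\mathrm{Ann}_A(I))=I$. $A$ satisfies the ideal intersection property if $J\cap A\neq\{0\}$ for every nonzero ideal $J$ of $B$. *)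

theory Defs
  imports "HOL-Analysis.Analysis"
begin

text \<open>A C*-algebra: a complex Banach algebra (non-unital ring) with a conjugate-linear,
anti-multiplicative involution satisfying the C*-identity. The algebra B is the whole type.\<close>

class cstar_algebra = real_normed_algebra + banach +
  fixes scaleC :: "complex \<Rightarrow> 'a \<Rightarrow> 'a"
    and invol :: "'a \<Rightarrow> 'a"
  assumes scaleC_add_right: "scaleC c (x + y) = scaleC c x + scaleC c y"
    and scaleC_add_left: "scaleC (c + d) x = scaleC c x + scaleC d x"
    and scaleC_scaleC: "scaleC c (scaleC d x) = scaleC (c * d) x"
    and scaleC_one: "scaleC 1 x = x"
    and scaleR_scaleC: "scaleR r x = scaleC (complex_of_real r) x"
    and scaleC_mult_left: "scaleC c x * y = scaleC c (x * y)"
    and scaleC_mult_right: "x * scaleC c y = scaleC c (x * y)"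
    and norm_scaleC: "norm (scaleC c x) = cmod c * norm x"
    and invol_invol: "invol (invol x) = x"
    and invol_add: "invol (x + y) = invol x + invol y"
    and invol_scaleC: "invol (scaleC c x) = scaleC (cnj c) (invol x)"
    and invol_mult: "invol (x * y) = invol y * invol x"
    and cstar_identity: "norm (invol x * x) = (norm x)\<^sup>2"

definition csubspace :: "'a::cstar_algebra set \<Rightarrow> bool" where
  "csubspace S \<longleftrightarrow> 0 \<in> S \<and> (\<forall>x\<in>S. \<forall>y\<in>S. x + y \<in> S) \<and> (\<forall>c. \<forall>x\<in>S. scaleC c x \<in> S)"

definition cspan :: "'a::cstar_algebra set \<Rightarrow> 'a set" where
  "cspan S = \<Inter>{T. csubspace T \<and> S \<subseteq> T}"

definition clspan :: "'a::cstar_algebra set \<Rightarrow> 'a set" where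
  "clspan S = closure (cspan S)"

definition cstar_subalgebra :: "'a::cstar_algebra set \<Rightarrow> bool" where
  "cstar_subalgebra A \<longleftrightarrow> closed A \<and> csubspace A \<and>
     (\<forall>x\<in>A. \<forall>y\<in>A. x * y \<in> A) \<and> (\<forall>x\<in>A. invol x \<in> A)"

text \<open>Closed two-sided ideal of the C*-subalgebra A (for B itself take A = UNIV).\<close>
definition ideal_of :: "'a::cstar_algebra set \<Rightarrow> 'a set \<Rightarrow> bool" where
  "ideal_of A I \<longleftrightarrow> I \<subseteq> A \<and> closed I \<and> csubspace I \<and>
     (\<forall>a\<in>A. \<forall>x\<in>I. a * x \<in> I \<and> x * a \<in> I)"

definition normalizer :: "'a::cstar_algebra set \<Rightarrow> 'a \<Rightarrow> bool" where
  "normalizer A n \<longleftrightarrow> (\<forall>a\<in>A. invol n * a * n \<in> A \<and> n * a * invol n \<in> A)"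

definition positive :: "'a::cstar_algebra \<Rightarrow> bool" where
  "positive e \<longleftrightarrow> (\<exists>x. e = invol x * x)"

text \<open>A contains an approximate unit for B: a net (here: a proper filter on elements)
  of positive contractions in A with e b \<rightarrow> b and b e \<rightarrow> b for all b in B.\<close>
definition contains_approx_unit :: "'a::cstar_algebra set \<Rightarrow> bool" where
  "contains_approx_unit A \<longleftrightarrow> (\<exists>F::'a filter. F \<noteq> bot \<and>
     (\<forall>\<^sub>F e in F. e \<in> A \<and> positive e \<and> norm e \<le> 1) \<and>
     (\<forall>b. ((\<lambda>e. e * b) \<longlongrightarrow> b) F \<and> ((\<lambda>e. b * e) \<longlongrightarrow> b) F))"

definition regular_subalgebra :: "'a::cstar_algebra set \<Rightarrow> bool" where
  "regular_subalgebra A \<longleftrightarrow> cstar_subalgebra A \<and>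
     closure (cspan {n. normalizer A n}) = UNIV \<and> contains_approx_unit A"

definition normalizer_invariant :: "'a::cstar_algebra set \<Rightarrow> 'a set \<Rightarrow> bool" where
  "normalizer_invariant A S \<longleftrightarrow> (\<forall>n. normalizer A n \<longrightarrow> (\<forall>s\<in>S. n * s * invol n \<in> S))"

definition B_invariant :: "'a::cstar_algebra set \<Rightarrow> bool" where
  "B_invariant S \<longleftrightarrow> clspan {s * b | s b. s \<in> S} = clspan {b * s | s b. s \<in> S}"

definition Ann :: "'a::cstar_algebra set \<Rightarrow> 'a set \<Rightarrow> 'a set" where
  "Ann A I = {x \<in> A. \<forall>s\<in>I. x * s = 0}"

definition regular_ideal :: "'a::cstar_algebra set \<Rightarrow> 'a set \<Rightarrow> bool" where
  "regular_ideal A I \<longleftrightarrow> ideal_of A I \<and> Ann A (Ann A I) = I"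

definition ideal_intersection_property :: "'a::cstar_algebra set \<Rightarrow> bool" where
  "ideal_intersection_property A \<longleftrightarrow>
     (\<forall>J. ideal_of UNIV J \<and> J \<noteq> {0} \<longrightarrow> J \<inter> A \<noteq> {0})"

end

theory Submission
  imports Defs
begin

text \<open>Let \<open>n\<close> be a normalizer and \<open>s \<in> I\<close>. The element \<open>x = n s n\<^sup>*\<close> lies in \<open>A\<close>, and also in
  the closed left ideal \<open>[BI]\<close> of \<open>B\<close>, since \<open>s n\<^sup>* \<in> [IB] = [BI]\<close> by \<open>B\<close>-invariance. Every
  \<open>y \<in> Ann(I)\<close> kills \<open>[IB] = [BI]\<close> from the left; with \<open>z = x y\<close> the product \<open>z z\<^sup>* z\<close> equals
  \<open>x (y (y\<^sup>* x\<^sup>* x)) y\<close>, where \<open>y\<^sup>* x\<^sup>* x \<in> [BI]\<close>, so \<open>z z\<^sup>* z = 0\<close> and the C*-identity forces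
  \<open>z = 0\<close>. Thus \<open>x \<in> Ann(Ann(I)) = I\<close>.\<close>

lemma csubspace_cspan: "csubspace (cspan S)"
  unfolding cspan_def csubspace_def by auto

lemma cspan_superset: "S \<subseteq> cspan S"
  unfolding cspan_def by auto

lemma cspan_least: "csubspace T \<Longrightarrow> S \<subseteq> T \<Longrightarrow> cspan S \<subseteq> T"
  unfolding cspan_def by auto

lemma clspan_superset: "S \<subseteq> clspan S"
  unfolding clspan_def using cspan_superset closure_subset by blast

lemma scaleC_zero_right: "scaleC c (0::'a::cstar_algebra) = 0"
proof -
  have "scaleC c (0::'a) = scaleC c 0 + scaleC c 0"
    using scaleC_add_right[of c "0::'a" 0] by simp
  then show ?thesis by simp
qed

lemma clspan_left_mult_zero:
  fixes y :: "'a::cstar_algebra"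
  assumes "\<And>x. x \<in> S \<Longrightarrow> y * x = 0" and "j \<in> clspan S"
  shows "y * j = 0"
proof -
  have "csubspace {j. y * j = 0}"
    unfolding csubspace_def by (auto simp: distrib_left scaleC_mult_right scaleC_zero_right)
  then have "(\<lambda>j. y * j) ` cspan S \<subseteq> {0}"
    using assms(1) cspan_least[of "{j. y * j = 0}" S] by auto
  then have "(\<lambda>j. y * j) ` closure (cspan S) \<subseteq> {0}"
    by (intro image_closure_subset continuous_intros) auto
  then show ?thesis using assms(2) unfolding clspan_def by auto
qed

lemma clspan_left_mult_closed:
  fixes b :: "'a::cstar_algebra"
  assumes "\<And>x. x \<in> S \<Longrightarrow> b * x \<in> S" and "j \<in> clspan S"
  shows "b * j \<in> clspan S"
proof -
  have "csubspace {j. b * j \<in> cspan S}"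
    using csubspace_cspan[of S] unfolding csubspace_def
    by (auto simp: distrib_left scaleC_mult_right)
  then have "(\<lambda>j. b * j) ` cspan S \<subseteq> closure (cspan S)"
    using assms(1) cspan_superset cspan_least[of "{j. b * j \<in> cspan S}" S] closure_subset
    by blast
  then have "(\<lambda>j. b * j) ` closure (cspan S) \<subseteq> closure (cspan S)"
    by (intro image_closure_subset continuous_intros) auto
  then show ?thesis using assms(2) unfolding clspan_def by auto
qed

lemma clspan_left_products_left_ideal:
  fixes c :: "'a::cstar_algebra"
  assumes "j \<in> clspan {b * s | s b. s \<in> I}"
  shows "c * j \<in> clspan {b * s | s b. s \<in> I}"
  using assms
proof (rule clspan_left_mult_closed[rotated])
  fix x assume "x \<in> {b * s | s b. s \<in> I}"
  then obtain s b where "x = b * s" "s \<in> I" by blast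
  then show "c * x \<in> {b * s | s b. s \<in> I}"
    by (metis (mono_tags, lifting) mem_Collect_eq mult.assoc)
qed

lemma Ann_left_mult_clspan_right_products:
  assumes "y \<in> Ann A I" and "j \<in> clspan {s * b | s b. s \<in> I}"
  shows "y * j = 0"
  using assms(2)
proof (rule clspan_left_mult_zero[rotated])
  fix x assume "x \<in> {s * b | s b. s \<in> I}"
  then obtain s b where "x = s * b" "s \<in> I" by blast
  with assms(1) show "y * x = 0"
    unfolding Ann_def by (simp add: mult.assoc[symmetric])
qed

lemma mult_invol_mult_eq_zero:
  fixes z :: "'a::cstar_algebra"
  assumes "z * invol z * z = 0"
  shows "z = 0"
proof -
  define w where "w = invol z * z"
  have "invol w * w = invol z * (z * invol z * z)"
    unfolding w_def by (simp add: invol_mult invol_invol mult.assoc)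
  then have "norm w = 0"
    using assms cstar_identity[of w] by simp
  then have "(norm z)\<^sup>2 = 0"
    using cstar_identity[of z] unfolding w_def by simp
  then show ?thesis by simp
qed

lemma left_ideal_mult_annihilator_eq_zero:
  fixes x y :: "'a::cstar_algebra"
  assumes left_ideal: "\<And>c j. j \<in> J \<Longrightarrow> c * j \<in> J"
    and kills: "\<And>j. j \<in> J \<Longrightarrow> y * j = 0"
    and "x \<in> J"
  shows "x * y = 0"
proof (rule mult_invol_mult_eq_zero)
  have "x * y * invol (x * y) * (x * y) = x * (y * (invol (x * y) * x)) * y"
    by (simp add: mult.assoc)
  also have "\<dots> = 0"
    using kills[OF left_ideal[OF \<open>x \<in> J\<close>]] by simp
  finally show "x * y * invol (x * y) * (x * y) = 0" .
qed

theorem proposition4p3: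
  fixes A I :: "'a::cstar_algebra set"
  assumes "regular_subalgebra A"
    and "ideal_intersection_property A"
    and "regular_ideal A I"
    and "B_invariant I"
  shows "normalizer_invariant A I"
  unfolding normalizer_invariant_def
proof (intro allI impI ballI)
  fix n s assume "normalizer A n" and "s \<in> I"
  let ?BI = "clspan {b * s | s b. s \<in> I}" and ?IB = "clspan {s * b | s b. s \<in> I}"
  have "I \<subseteq> A" and Ann_Ann: "Ann A (Ann A I) = I"
    using assms(3) unfolding regular_ideal_def ideal_of_def by auto
  have IB_eq_BI: "?IB = ?BI"
    using assms(4) unfolding B_invariant_def .
  have "n * s * invol n \<in> A"
    using \<open>normalizer A n\<close> \<open>s \<in> I\<close> \<open>I \<subseteq> A\<close> unfolding normalizer_def by auto
  moreover have "n * s * invol n \<in> ?BI"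
    using clspan_superset[of "{s * b | s b. s \<in> I}"] \<open>s \<in> I\<close> IB_eq_BI
      clspan_left_products_left_ideal[of "s * invol n" I n]
    by (auto simp: mult.assoc)
  then have "n * s * invol n * y = 0" if "y \<in> Ann A I" for y
    using left_ideal_mult_annihilator_eq_zero[of ?BI y] clspan_left_products_left_ideal
      Ann_left_mult_clspan_right_products[OF that] IB_eq_BI
    by auto
  ultimately show "n * s * invol n \<in> I"
    using Ann_Ann unfolding Ann_def by auto
qed

end
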